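(* Let $R$ be a commutative Noetherian ring, $n$ a non-negative integer and $L$ an $R$-module with $\dim L\ge n$. If $L'$ is a submodule of $L$ with $\dim L/L'\ge n$, then $$\bigcap_{\mathfrak p\in(\operatorname{Ass}_R L)_{\ge n}}\mathfrak p\ \subseteq\ \bigcap_{\mathfrak p\in(\operatorname{Ass}_R L/L')_{\ge n}}\mathfrak p.$$
   Context: For an $R$-module $L$, $\dim L=\sup\{\dim R/\mathfrak p:\mathfrak p\in\operatorname{Supp}L\}$. For a subset $T\subseteq\operatorname{Spec}R$, $(T)_{\ge n}=\{\mathfrak p\in T:\dim R/\mathfrak p\ge n\}$. *)

theory Defs
  imports "HOL-Algebra.Algebra" "HOL-Library.Extended_Nat"
begin

text \<open>Krull dimension of a ring: supremum of lengths k of chains of prime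
  ideals P0 < P1 < ... < Pk (value in enat; a ring with no primes gets 0).\<close>
definition krull_dim :: "('r, 'm) ring_scheme \<Rightarrow> enat" where
  "krull_dim S = Sup {enat k | k. \<exists>c :: nat \<Rightarrow> 'r set.
      (\<forall>i\<le>k. primeideal (c i) S) \<and> (\<forall>i<k. c i \<subset> c (Suc i))}"

definition dim_quot :: "('a, 'm) ring_scheme \<Rightarrow> 'a set \<Rightarrow> enat" where
  "dim_quot R p = krull_dim (R Quot p)"

text \<open>We work with the quotient module M/N through representatives:
  the class of x in M/N is zero iff x \<in> N.  Annihilator of the class of x:\<close>
definition ann_quot :: "('a, 'c) ring_scheme \<Rightarrow> ('a, 'b, 'd) module_scheme \<Rightarrow> 'b set \<Rightarrow> 'b \<Rightarrow> 'a set" where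
  "ann_quot R M N x = {r \<in> carrier R. r \<odot>\<^bsub>M\<^esub> x \<in> N}"

definition Ass_quot :: "('a, 'c) ring_scheme \<Rightarrow> ('a, 'b, 'd) module_scheme \<Rightarrow> 'b set \<Rightarrow> 'a set set" where
  "Ass_quot R M N = {p. primeideal p R \<and> (\<exists>x \<in> carrier M. p = ann_quot R M N x)}"

text \<open>Supp(M/N): primes p with (M/N)_p \<noteq> 0, i.e. some element x/1 of the
  localization is nonzero: no s \<notin> p kills the class of x.\<close>
definition Supp_quot :: "('a, 'c) ring_scheme \<Rightarrow> ('a, 'b, 'd) module_scheme \<Rightarrow> 'b set \<Rightarrow> 'a set set" where
  "Supp_quot R M N = {p. primeideal p R \<and>
      (\<exists>x \<in> carrier M. \<forall>s \<in> carrier R - p. s \<odot>\<^bsub>M\<^esub> x \<notin> N)}"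

definition Ass :: "('a, 'c) ring_scheme \<Rightarrow> ('a, 'b, 'd) module_scheme \<Rightarrow> 'a set set" where
  "Ass R M = Ass_quot R M {\<zero>\<^bsub>M\<^esub>}"

definition Supp :: "('a, 'c) ring_scheme \<Rightarrow> ('a, 'b, 'd) module_scheme \<Rightarrow> 'a set set" where
  "Supp R M = Supp_quot R M {\<zero>\<^bsub>M\<^esub>}"

definition dim_quot_mod :: "('a, 'c) ring_scheme \<Rightarrow> ('a, 'b, 'd) module_scheme \<Rightarrow> 'b set \<Rightarrow> enat" where
  "dim_quot_mod R M N = Sup (dim_quot R ` Supp_quot R M N)"

definition dim_mod :: "('a, 'c) ring_scheme \<Rightarrow> ('a, 'b, 'd) module_scheme \<Rightarrow> enat" where
  "dim_mod R M = dim_quot_mod R M {\<zero>\<^bsub>M\<^esub>}"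

definition ge_dim :: "('a, 'c) ring_scheme \<Rightarrow> 'a set set \<Rightarrow> nat \<Rightarrow> 'a set set" where
  "ge_dim R T n = {p \<in> T. enat n \<le> dim_quot R p}"

end

theory Submission
  imports Defs
begin

text \<open>Let q = ann(x + L') be an associated prime of L/L' with dim R/q \<ge> n. No element outside q
  kills x, so x/1 \<noteq> 0 in L_q and q \<in> Supp L. Over a Noetherian ring every prime in the support
  contains an associated prime: choose y with y/1 \<noteq> 0 in L_q whose annihilator in L_q is maximal;
  its contraction p to R is prime, and as p is finitely generated a single s \<notin> q clears all
  denominators, so p = ann(s y) \<in> Ass L. Since p \<subseteq> q, dim R/p \<ge> dim R/q \<ge> n, hence the left-hand
  intersection is contained in p \<subseteq> q.\<close>

lemma (in ring) quot_ideal_image_Union: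
  assumes I: "ideal I R" and J: "ideal J (R Quot I)"
  shows "(+>) I ` \<Union> J = J" and "I \<subseteq> \<Union> J"
proof -
  have "J \<in> (\<lambda>K. (+>) I ` K) ` {K. ideal K R \<and> I \<subseteq> K}"
    using quot_ideal_correspondence[OF I] J unfolding bij_betw_def by simp
  then obtain K where K: "ideal K R" "I \<subseteq> K" and JK: "J = (+>) I ` K"
    by blast
  have "\<Union> J = K"
    using ideal_incl_iff[OF I K(1)] K(2) unfolding JK by simp
  then show "(+>) I ` \<Union> J = J" and "I \<subseteq> \<Union> J"
    using JK K(2) by simp_all
qed

lemma (in ring) quot_image_mem_iff:
  assumes I: "ideal I R" and J: "ideal J R" and IJ: "I \<subseteq> J" and a: "a \<in> carrier R"
  shows "I +> a \<in> (+>) I ` J \<longleftrightarrow> a \<in> J"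
proof -
  have "(+>) I ` J \<subseteq> carrier (R Quot I)"
    using ring_ideal_imp_quot_ideal[OF I J] by (simp add: additive_subgroup.a_subset ideal.axioms(1))
  then have "a \<in> \<Union> ((+>) I ` J) \<longleftrightarrow> I +> a \<in> (+>) I ` J"
    by (rule canonical_proj_vimage_mem_iff[OF I _ a])
  moreover have "\<Union> ((+>) I ` J) = J"
    using ideal_incl_iff[OF I J] IJ by simp
  ultimately show ?thesis
    by simp
qed

lemma (in cring) primeideal_quot_image:
  assumes I: "ideal I R" and P: "primeideal P R" and IP: "I \<subseteq> P"
  shows "primeideal ((+>) I ` P) (R Quot I)"
proof -
  have iP: "ideal P R"
    using P by (rule primeideal.axioms(1))
  have hom: "(+>) I \<in> ring_hom R (R Quot I)"
    using I by (rule ideal.rcos_ring_hom)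
  have mem: "I +> a \<in> (+>) I ` P \<longleftrightarrow> a \<in> P" if "a \<in> carrier R" for a
    using quot_image_mem_iff[OF I iP IP that] .
  show ?thesis
  proof (rule primeidealI[OF ring_ideal_imp_quot_ideal[OF I iP] ideal.quotient_is_cring[OF I is_cring]])
    have "\<one> \<notin> P"
      using ideal.one_imp_carrier[OF iP] primeideal.I_notcarr[OF P] by blast
    then have "I +> \<one> \<notin> (+>) I ` P"
      using mem by simp
    moreover have "I +> \<one> \<in> carrier (R Quot I)"
      using ring_hom_closed[OF hom one_closed] .
    ultimately show "carrier (R Quot I) \<noteq> (+>) I ` P"
      by blast
  next
    fix x y assume x: "x \<in> carrier (R Quot I)" and y: "y \<in> carrier (R Quot I)"
      and xy: "x \<otimes>\<^bsub>R Quot I\<^esub> y \<in> (+>) I ` P"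
    obtain a b where ab: "a \<in> carrier R" "b \<in> carrier R" "x = I +> a" "y = I +> b"
      using x y unfolding FactRing_def A_RCOSETS_def' by auto
    then have "I +> (a \<otimes> b) \<in> (+>) I ` P"
      using xy ring_hom_mult[OF hom] by simp
    then have "a \<in> P \<or> b \<in> P"
      using mem ab primeideal.I_prime[OF P] by simp
    then show "x \<in> (+>) I ` P \<or> y \<in> (+>) I ` P"
      using ab by blast
  qed
qed

lemma (in cring) primeideal_Union_quot:
  assumes I: "ideal I R" and P: "primeideal P (R Quot I)"
  shows "primeideal (\<Union> P) R"
proof -
  have sub: "P \<subseteq> carrier (R Quot I)"
    using additive_subgroup.a_subset[OF ideal.axioms(1)[OF primeideal.axioms(1)[OF P]]] .
  have "\<Union> P = {r \<in> carrier R. I +> r \<in> P}"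
  proof (intro equalityI subsetI)
    fix r assume r: "r \<in> \<Union> P"
    then have "r \<in> carrier R"
      using canonical_proj_vimage_in_carrier[OF I sub] by blast
    then show "r \<in> {r \<in> carrier R. I +> r \<in> P}"
      using r canonical_proj_vimage_mem_iff[OF I sub] by blast
  next
    fix r assume "r \<in> {r \<in> carrier R. I +> r \<in> P}"
    then show "r \<in> \<Union> P"
      using canonical_proj_vimage_mem_iff[OF I sub] by blast
  qed
  then show ?thesis
    using ring_hom_ring.primeideal_vimage[OF ideal.rcos_ring_hom_ring[OF I] is_cring P] by simp
qed

lemma (in cring) krull_dim_Quot_antimono:
  assumes I: "ideal I R" and J: "ideal J R" and IJ: "I \<subseteq> J"
  shows "krull_dim (R Quot J) \<le> krull_dim (R Quot I)"
  unfolding krull_dim_def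
proof (rule Sup_subset_mono, safe)
  fix k and c :: "nat \<Rightarrow> 'a set set"
  assume prime: "\<forall>i\<le>k. primeideal (c i) (R Quot J)" and strict: "\<forall>i<k. c i \<subset> c (Suc i)"
  have pU: "primeideal (\<Union> (c i)) R" and JU: "J \<subseteq> \<Union> (c i)" and cU: "(+>) J ` \<Union> (c i) = c i"
    if "i \<le> k" for i
  proof -
    have pc: "primeideal (c i) (R Quot J)"
      using prime that by blast
    then show "primeideal (\<Union> (c i)) R"
      by (rule primeideal_Union_quot[OF J])
    show "J \<subseteq> \<Union> (c i)" "(+>) J ` \<Union> (c i) = c i"
      using quot_ideal_image_Union[OF J primeideal.axioms(1)[OF pc]] by simp_all
  qed
  define c' where "c' i = (+>) I ` \<Union> (c i)" for i
  have "primeideal (c' i) (R Quot I)" if "i \<le> k" for i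
    unfolding c'_def using primeideal_quot_image[OF I pU[OF that] order_trans[OF IJ JU[OF that]]] .
  moreover have "c' i \<subset> c' (Suc i)" if "i < k" for i
  proof -
    have le: "i \<le> k" "Suc i \<le> k"
      using that by auto
    have "c' i \<subseteq> c' (Suc i)"
      using strict that unfolding c'_def by blast
    moreover have "c' i \<noteq> c' (Suc i)"
    proof
      assume "c' i = c' (Suc i)"
      moreover have "\<Union> (c' j) = \<Union> (c j)" if "j \<le> k" for j
        unfolding c'_def using ideal_incl_iff[OF I primeideal.axioms(1)[OF pU[OF that]]] JU[OF that] IJ
        by blast
      ultimately have "\<Union> (c i) = \<Union> (c (Suc i))"
        using le by metis
      then have "c i = c (Suc i)"
        using cU[OF le(1)] cU[OF le(2)] by metis
      then show False
        using strict that by blast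
    qed
    ultimately show ?thesis by blast
  qed
  ultimately show "\<exists>k'. enat k = enat k' \<and>
      (\<exists>c. (\<forall>i\<le>k'. primeideal (c i) (R Quot I)) \<and> (\<forall>i<k'. c i \<subset> c (Suc i)))"
    by blast
qed

lemma (in cring) idealI_closed:
  assumes "I \<subseteq> carrier R" "\<zero> \<in> I"
    and "\<And>a b. a \<in> I \<Longrightarrow> b \<in> I \<Longrightarrow> a \<oplus> b \<in> I"
    and "\<And>a. a \<in> I \<Longrightarrow> \<ominus> a \<in> I"
    and "\<And>a x. a \<in> I \<Longrightarrow> x \<in> carrier R \<Longrightarrow> x \<otimes> a \<in> I"
  shows "ideal I R"
proof (rule idealI[OF ring_axioms])
  show "subgroup I (add_monoid R)"
    using assms by (intro add.subgroupI) (auto simp: a_inv_def)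
  show "x \<otimes> a \<in> I" and "a \<otimes> x \<in> I" if "a \<in> I" "x \<in> carrier R" for a x
    using assms(1,5) that m_comm[of a x] by auto
qed

lemma (in ring) one_notin_primeideal:
  assumes "primeideal q R"
  shows "\<one> \<in> carrier R - q"
  using ideal.one_imp_carrier[OF primeideal.axioms(1)[OF assms]] primeideal.I_notcarr[OF assms] by auto

lemma (in noetherian_ring) ideal_family_has_maximal:
  assumes "F \<noteq> {}" and "\<And>I. I \<in> F \<Longrightarrow> ideal I R"
  shows "\<exists>I\<in>F. \<forall>J\<in>F. I \<subseteq> J \<longrightarrow> J = I"
proof (rule Zorn_Lemma2, rule ballI)
  fix C assume C: "C \<in> chains F"
  show "\<exists>U\<in>F. \<forall>J\<in>C. J \<subseteq> U"
  proof (cases "C = {}")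
    case True
    then show ?thesis using assms(1) by blast
  next
    case False
    have "subset.chain {I. ideal I R} C"
      using C assms(2) unfolding chains_def chain_subset_def pred_on.chain_def by blast
    then have "\<Union>C \<in> C"
      using ideal_chain_is_trivial[OF False] by blast
    then show ?thesis
      using C unfolding chains_def by blast
  qed
qed

context module
begin

definition annihilator :: "'c \<Rightarrow> 'a set" where
  "annihilator x = {r \<in> carrier R. r \<odot>\<^bsub>M\<^esub> x = \<zero>\<^bsub>M\<^esub>}"

text \<open>The contraction to R of the annihilator of x/1 in the localisation M_q.\<close>
definition loc_ann :: "'a set \<Rightarrow> 'c \<Rightarrow> 'a set" where
  "loc_ann q x = {r \<in> carrier R. \<exists>s \<in> carrier R - q. (s \<otimes> r) \<odot>\<^bsub>M\<^esub> x = \<zero>\<^bsub>M\<^esub>}"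

text \<open>x/1 \<noteq> 0 in M_q.\<close>
definition loc_nonzero :: "'a set \<Rightarrow> 'c \<Rightarrow> bool" where
  "loc_nonzero q x \<longleftrightarrow> x \<in> carrier M \<and> (\<forall>s \<in> carrier R - q. s \<odot>\<^bsub>M\<^esub> x \<noteq> \<zero>\<^bsub>M\<^esub>)"

lemma smult_mult_eq_zero:
  assumes "a \<in> carrier R" "b \<in> carrier R" "x \<in> carrier M" "b \<odot>\<^bsub>M\<^esub> x = \<zero>\<^bsub>M\<^esub>"
  shows "(a \<otimes> b) \<odot>\<^bsub>M\<^esub> x = \<zero>\<^bsub>M\<^esub>" and "(b \<otimes> a) \<odot>\<^bsub>M\<^esub> x = \<zero>\<^bsub>M\<^esub>"
  using assms by (simp_all add: smult_assoc1 m_comm[of b a])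

lemma smult_comm:
  assumes "a \<in> carrier R" "b \<in> carrier R" "x \<in> carrier M"
  shows "a \<odot>\<^bsub>M\<^esub> (b \<odot>\<^bsub>M\<^esub> x) = b \<odot>\<^bsub>M\<^esub> (a \<odot>\<^bsub>M\<^esub> x)"
  using smult_assoc1[of a b x] smult_assoc1[of b a x] m_comm[of a b] assms by simp

lemma annihilator_ideal:
  assumes x: "x \<in> carrier M"
  shows "ideal (annihilator x) R"
proof (rule idealI_closed)
  fix a b assume "a \<in> annihilator x" "b \<in> annihilator x"
  then show "a \<oplus> b \<in> annihilator x"
    using x unfolding annihilator_def by (simp add: smult_l_distr)
next
  fix a assume "a \<in> annihilator x"
  then show "\<ominus> a \<in> annihilator x"
    using x unfolding annihilator_def by (simp add: smult_l_minus)
next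
  fix a r assume "a \<in> annihilator x" "r \<in> carrier R"
  then show "r \<otimes> a \<in> annihilator x"
    using x smult_mult_eq_zero(1)[of r a x] unfolding annihilator_def by simp
qed (use x in \<open>auto simp: annihilator_def\<close>)

lemma loc_ann_ideal:
  assumes q: "primeideal q R" and x: "x \<in> carrier M"
  shows "ideal (loc_ann q x) R"
proof (rule idealI_closed)
  show "\<zero> \<in> loc_ann q x"
    unfolding loc_ann_def using one_notin_primeideal[OF q] x by auto
next
  fix a b assume "a \<in> loc_ann q x" "b \<in> loc_ann q x"
  then obtain s t where a: "a \<in> carrier R" "s \<in> carrier R - q" "(s \<otimes> a) \<odot>\<^bsub>M\<^esub> x = \<zero>\<^bsub>M\<^esub>"
    and b: "b \<in> carrier R" "t \<in> carrier R - q" "(t \<otimes> b) \<odot>\<^bsub>M\<^esub> x = \<zero>\<^bsub>M\<^esub>"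
    unfolding loc_ann_def by auto
  have st: "s \<otimes> t \<in> carrier R - q"
    using a b primeideal.I_prime[OF q] by auto
  have "(s \<otimes> t) \<otimes> (a \<oplus> b) = t \<otimes> (s \<otimes> a) \<oplus> s \<otimes> (t \<otimes> b)"
    using a b by (simp add: r_distr m_ac)
  then have "((s \<otimes> t) \<otimes> (a \<oplus> b)) \<odot>\<^bsub>M\<^esub> x = \<zero>\<^bsub>M\<^esub>"
    using a b x by (simp add: smult_l_distr smult_mult_eq_zero)
  then show "a \<oplus> b \<in> loc_ann q x"
    unfolding loc_ann_def using st a b by auto
next
  fix a assume "a \<in> loc_ann q x"
  then obtain s where a: "a \<in> carrier R" "s \<in> carrier R - q" "(s \<otimes> a) \<odot>\<^bsub>M\<^esub> x = \<zero>\<^bsub>M\<^esub>"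
    unfolding loc_ann_def by auto
  then have "(s \<otimes> \<ominus> a) \<odot>\<^bsub>M\<^esub> x = \<zero>\<^bsub>M\<^esub>"
    using x by (simp add: r_minus smult_l_minus)
  then show "\<ominus> a \<in> loc_ann q x"
    unfolding loc_ann_def using a by auto
next
  fix a r assume "a \<in> loc_ann q x" and r: "r \<in> carrier R"
  then obtain s where a: "a \<in> carrier R" "s \<in> carrier R - q" "(s \<otimes> a) \<odot>\<^bsub>M\<^esub> x = \<zero>\<^bsub>M\<^esub>"
    unfolding loc_ann_def by auto
  then have "(s \<otimes> (r \<otimes> a)) \<odot>\<^bsub>M\<^esub> x = \<zero>\<^bsub>M\<^esub>"
    using r x smult_mult_eq_zero(1)[of r "s \<otimes> a"] by (simp add: m_lcomm)
  then show "r \<otimes> a \<in> loc_ann q x"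
    unfolding loc_ann_def using a r by auto
qed (auto simp: loc_ann_def)

lemma loc_ann_subset:
  assumes q: "primeideal q R" and x: "loc_nonzero q x"
  shows "loc_ann q x \<subseteq> q"
proof
  fix r assume "r \<in> loc_ann q x"
  then obtain s where "r \<in> carrier R" "s \<in> carrier R - q" "(s \<otimes> r) \<odot>\<^bsub>M\<^esub> x = \<zero>\<^bsub>M\<^esub>"
    unfolding loc_ann_def by auto
  then show "r \<in> q"
    using x primeideal.I_prime[OF q] unfolding loc_nonzero_def by blast
qed

lemma loc_nonzero_smult:
  assumes x: "loc_nonzero q x" and a: "a \<in> carrier R" "a \<notin> loc_ann q x"
  shows "loc_nonzero q (a \<odot>\<^bsub>M\<^esub> x)"
  using assms unfolding loc_nonzero_def loc_ann_def by (auto simp: smult_assoc1)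

lemma loc_ann_smult_mono:
  assumes "x \<in> carrier M" "a \<in> carrier R"
  shows "loc_ann q x \<subseteq> loc_ann q (a \<odot>\<^bsub>M\<^esub> x)"
proof
  fix r assume "r \<in> loc_ann q x"
  then obtain s where s: "r \<in> carrier R" "s \<in> carrier R - q" "(s \<otimes> r) \<odot>\<^bsub>M\<^esub> x = \<zero>\<^bsub>M\<^esub>"
    unfolding loc_ann_def by blast
  then have "(s \<otimes> r) \<odot>\<^bsub>M\<^esub> (a \<odot>\<^bsub>M\<^esub> x) = \<zero>\<^bsub>M\<^esub>"
    using assms smult_comm[of "s \<otimes> r" a x] by simp
  then show "r \<in> loc_ann q (a \<odot>\<^bsub>M\<^esub> x)"
    unfolding loc_ann_def using s by blast
qed

text \<open>Maximality gives \<open>loc_ann q (a \<odot> x) = loc_ann q x\<close> for every \<open>a \<notin> loc_ann q x\<close>.\<close>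
lemma maximal_loc_ann_primeideal:
  assumes q: "primeideal q R" and x: "loc_nonzero q x"
    and max: "\<And>y. loc_nonzero q y \<Longrightarrow> loc_ann q x \<subseteq> loc_ann q y \<Longrightarrow> loc_ann q y = loc_ann q x"
  shows "primeideal (loc_ann q x) R"
proof -
  have xc: "x \<in> carrier M"
    using x unfolding loc_nonzero_def by simp
  show ?thesis
  proof (rule primeidealI[OF loc_ann_ideal[OF q xc] is_cring])
    show "carrier R \<noteq> loc_ann q x"
      using loc_ann_subset[OF q x] one_notin_primeideal[OF q] by blast
  next
    fix a b assume a: "a \<in> carrier R" and b: "b \<in> carrier R" and ab: "a \<otimes> b \<in> loc_ann q x"
    show "a \<in> loc_ann q x \<or> b \<in> loc_ann q x"
    proof (cases "a \<in> loc_ann q x")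
      case False
      then have "loc_ann q (a \<odot>\<^bsub>M\<^esub> x) = loc_ann q x"
        using max loc_nonzero_smult[OF x a] loc_ann_smult_mono[OF xc a] by blast
      obtain s where s: "s \<in> carrier R - q" "(s \<otimes> (a \<otimes> b)) \<odot>\<^bsub>M\<^esub> x = \<zero>\<^bsub>M\<^esub>"
        using ab unfolding loc_ann_def by auto
      then have "(s \<otimes> b) \<odot>\<^bsub>M\<^esub> (a \<odot>\<^bsub>M\<^esub> x) = \<zero>\<^bsub>M\<^esub>"
        using a b xc by (simp add: smult_assoc1 smult_comm[of b a])
      then have "b \<in> loc_ann q (a \<odot>\<^bsub>M\<^esub> x)"
        unfolding loc_ann_def using s b by auto
      with \<open>loc_ann q (a \<odot>\<^bsub>M\<^esub> x) = loc_ann q x\<close> show ?thesis by simp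
    qed simp
  qed
qed

lemma loc_ann_finite_common_denominator:
  assumes "finite G" "G \<subseteq> loc_ann q x" and q: "primeideal q R" and x: "x \<in> carrier M"
  shows "\<exists>s \<in> carrier R - q. \<forall>g \<in> G. (s \<otimes> g) \<odot>\<^bsub>M\<^esub> x = \<zero>\<^bsub>M\<^esub>"
  using assms(1,2)
proof (induction G)
  case empty
  then show ?case using one_notin_primeideal[OF q] by blast
next
  case (insert g G)
  obtain s where s: "s \<in> carrier R - q" "\<forall>h \<in> G. (s \<otimes> h) \<odot>\<^bsub>M\<^esub> x = \<zero>\<^bsub>M\<^esub>"
    using insert.IH insert.prems by blast
  obtain t where t: "t \<in> carrier R - q" "(t \<otimes> g) \<odot>\<^bsub>M\<^esub> x = \<zero>\<^bsub>M\<^esub>"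
    using insert.prems unfolding loc_ann_def by blast
  have "s \<otimes> t \<in> carrier R - q"
    using s t primeideal.I_prime[OF q] by auto
  moreover have "(s \<otimes> t \<otimes> h) \<odot>\<^bsub>M\<^esub> x = \<zero>\<^bsub>M\<^esub>" if "h \<in> insert g G" for h
  proof -
    have h: "h \<in> carrier R"
      using that insert.prems unfolding loc_ann_def by blast
    show ?thesis
    proof (cases "h = g")
      case True
      then have "s \<otimes> t \<otimes> h = s \<otimes> (t \<otimes> g)"
        using s t h by (simp add: m_assoc)
      then show ?thesis
        using True s t x h smult_mult_eq_zero(1)[of s "t \<otimes> g"] by simp
    next
      case False
      have "s \<otimes> t \<otimes> h = t \<otimes> (s \<otimes> h)"
        using s t h m_comm[of s t] m_assoc[of t s h] by simp
      then show ?thesis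
        using False that s t x h smult_mult_eq_zero(1)[of t "s \<otimes> h"] by simp
    qed
  qed
  ultimately show ?case by blast
qed

lemma loc_ann_eq_annihilator:
  assumes "noetherian_ring R" and q: "primeideal q R" and x: "x \<in> carrier M"
  shows "\<exists>s \<in> carrier R - q. loc_ann q x = annihilator (s \<odot>\<^bsub>M\<^esub> x)"
proof -
  obtain G where G: "G \<subseteq> carrier R" "finite G" "loc_ann q x = Idl G"
    using noetherian_ring.finetely_gen[OF assms(1) loc_ann_ideal[OF q x]] by blast
  then have "G \<subseteq> loc_ann q x"
    using genideal_self by simp
  then obtain s where s: "s \<in> carrier R - q" "\<forall>g \<in> G. (s \<otimes> g) \<odot>\<^bsub>M\<^esub> x = \<zero>\<^bsub>M\<^esub>"
    using loc_ann_finite_common_denominator[OF G(2) _ q x] by blast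
  have "G \<subseteq> annihilator (s \<odot>\<^bsub>M\<^esub> x)"
  proof
    fix g assume "g \<in> G"
    then show "g \<in> annihilator (s \<odot>\<^bsub>M\<^esub> x)"
      using G(1) s x smult_comm[of g s x] smult_assoc1[of s g x] unfolding annihilator_def by auto
  qed
  then have "loc_ann q x \<subseteq> annihilator (s \<odot>\<^bsub>M\<^esub> x)"
    using G(3) genideal_minimal[OF annihilator_ideal] s x by simp
  moreover have "annihilator (s \<odot>\<^bsub>M\<^esub> x) \<subseteq> loc_ann q x"
    using s x unfolding annihilator_def loc_ann_def by (auto simp: smult_assoc1[symmetric] m_comm)
  ultimately show ?thesis
    using s(1) by blast
qed

lemma Supp_has_Ass_below:
  assumes "noetherian_ring R" and q: "q \<in> Supp R M"
  shows "\<exists>p \<in> Ass R M. p \<subseteq> q"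
proof -
  define F where "F = {loc_ann q y | y. loc_nonzero q y}"
  have qp: "primeideal q R" and "F \<noteq> {}"
    using q unfolding F_def Supp_def Supp_quot_def loc_nonzero_def by auto
  moreover have "ideal I R" if "I \<in> F" for I
    using that loc_ann_ideal[OF qp] unfolding F_def loc_nonzero_def by blast
  ultimately obtain I where I: "I \<in> F" and max_I: "\<forall>J\<in>F. I \<subseteq> J \<longrightarrow> J = I"
    using noetherian_ring.ideal_family_has_maximal[OF assms(1)] by blast
  then obtain x where x: "loc_nonzero q x" and "I = loc_ann q x"
    unfolding F_def by blast
  with max_I have max: "\<And>y. loc_nonzero q y \<Longrightarrow> loc_ann q x \<subseteq> loc_ann q y \<Longrightarrow> loc_ann q y = loc_ann q x"
    unfolding F_def by blast
  have xc: "x \<in> carrier M"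
    using x unfolding loc_nonzero_def by simp
  obtain s where s: "s \<in> carrier R" and ann: "loc_ann q x = annihilator (s \<odot>\<^bsub>M\<^esub> x)"
    using loc_ann_eq_annihilator[OF assms(1) qp xc] by blast
  have "loc_ann q x \<in> Ass R M"
    using maximal_loc_ann_primeideal[OF qp x max] s xc
    unfolding ann Ass_def Ass_quot_def ann_quot_def annihilator_def by auto
  then show ?thesis
    using loc_ann_subset[OF qp x] by blast
qed

lemma Ass_quot_subset_Supp:
  assumes "submodule N R M"
  shows "Ass_quot R M N \<subseteq> Supp R M"
proof
  fix q assume "q \<in> Ass_quot R M N"
  then obtain x where q: "primeideal q R" "x \<in> carrier M" "q = ann_quot R M N x"
    unfolding Ass_quot_def by blast
  have "\<zero>\<^bsub>M\<^esub> \<in> N"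
    using subgroup.one_closed[OF submodule.axioms(1)[OF assms]] by simp
  then have "s \<odot>\<^bsub>M\<^esub> x \<noteq> \<zero>\<^bsub>M\<^esub>" if "s \<in> carrier R - q" for s
    using that q(3) unfolding ann_quot_def by auto
  then show "q \<in> Supp R M"
    using q unfolding Supp_def Supp_quot_def by auto
qed

end

theorem lemma2p5:
  fixes R :: "('a, 'c) ring_scheme" and L :: "('a, 'b, 'd) module_scheme"
    and L' :: "'b set" and n :: nat
  assumes "noetherian_ring R" and "cring R"
    and "module R L"
    and "enat n \<le> dim_mod R L"
    and "submodule L' R L"
    and "enat n \<le> dim_quot_mod R L L'"
  shows "carrier R \<inter> (\<Inter>p \<in> ge_dim R (Ass R L) n. p)
           \<subseteq> carrier R \<inter> (\<Inter>p \<in> ge_dim R (Ass_quot R L L') n. p)"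
proof
  fix r assume r: "r \<in> carrier R \<inter> (\<Inter>p \<in> ge_dim R (Ass R L) n. p)"
  interpret module R L by fact
  have "r \<in> q" if q: "q \<in> ge_dim R (Ass_quot R L L') n" for q
  proof -
    have "q \<in> Supp R L"
      using q Ass_quot_subset_Supp[OF assms(5)] unfolding ge_dim_def by blast
    then obtain p where p: "p \<in> Ass R L" "p \<subseteq> q"
      using Supp_has_Ass_below[OF assms(1)] by blast
    have "ideal p R" "ideal q R"
      using p(1) q primeideal.axioms(1) unfolding Ass_def Ass_quot_def ge_dim_def by auto
    then have "dim_quot R q \<le> dim_quot R p"
      unfolding dim_quot_def using p(2) by (rule krull_dim_Quot_antimono)
    then have "p \<in> ge_dim R (Ass R L) n"
      using p q unfolding ge_dim_def by (auto intro: order_trans)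
    then show "r \<in> q"
      using r p by blast
  qed
  then show "r \<in> carrier R \<inter> (\<Inter>p \<in> ge_dim R (Ass_quot R L L') n. p)"
    using r by blast
qed

end
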